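(* Let $(\Omega,\mathcal{F},\mu_1)$ be a finite measure space and let $\{e_n\}_{n=0}^{\infty}$ be as in the context, with a fixed exponent $\nu>2$ and a nondecreasing sequence $(M_n)$ such that $\|e_n\|_{L_\nu(\Omega,\mu_1)}\le M_n$ for all $n$. Let $2\le p<\infty$, let $A$ be a bounded linear operator on $L_p(\Omega,\mu_1)$, and put $A_{mn}:=(e_m,Ae_n)_{\mu_1}$. Let $\beta,\lambda\in[0,\infty)$ and let $\psi\in L_p(\Omega,\mu_1)$ with coefficients $\psi_n=(\psi,e_n)_{\mu_1}$. Assume that for every $m$ the series $\sum_{n=0}^\infty \psi_n A_{mn}$ converges and $$\Big|\sum_{n=0}^{\infty}\psi_n A_{mn}\Big|\sim m^{-\lambda},\qquad M_m\sim m^{\beta}\qquad (m\to\infty).$$ Put $f:=A\psi$. Then $f_m:=(f,e_m)_{\mu_1}=\sum_{n=0}^\infty\psi_nA_{mn}$ for all $m$, and: (i) if $0\le\lambda\le 1/2$, then $f\in L_p(\Omega,\mu_1)$; (ii) if $1/2<\lambda<\dfrac{\nu(\beta+1)-1}{\nu-2}$, then $f\in L_q(\Omega,\mu_1)$ for every $q$ with $2\le q<\nu$ and $$q<\frac{\nu(2\beta+1)}{\nu(\beta+1-\lambda)+2\lambda-1};$$ (iii) if $\lambda\ge\dfrac{\nu(\beta+1)-1}{\nu-2}$, then $f\in L_q(\Omega,\mu_1)$ for every $q$ with $2\le q<\nu$. Moreover, in each case $f$ is represented by the series $$f=\sum_{m=0}^{\infty}e_m\sum_{n=0}^{\infty}\psi_nA_{mn},$$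 convergent in $L_q(\Omega,\mu_1)$ for the corresponding admissible $q$ (with $q=p$ in case (i)).
   Context: All functions are real-valued. $(\Omega,\mathcal{F},\mu_1)$ is a finite measure space, $1<p<\infty$, $1/p+1/p'=1$, and $(u,v)_{\mu_1}:=\int_\Omega uv\,d\mu_1$. The system $\{e_n\}_{n\ge0}$ is a Schauder basis of $L_p(\Omega,\mu_1)$ and of $L_{p'}(\Omega,\mu_1)$ whose coefficient functionals are $u\mapsto (u,e_n)_{\mu_1}$, i.e. every $u\in L_p(\Omega,\mu_1)$ satisfies $u=\sum_n (u,e_n)_{\mu_1}e_n$ in $L_p(\Omega,\mu_1)$, with partial sums $S_ku=\sum_{n=0}^k(u,e_n)_{\mu_1}e_n$. Moreover $e_n\in L_\nu(\Omega,\mu_1)$ for a fixed $\nu>2$, with $\|e_n\|_{L_\nu(\Omega,\mu_1)}\le M_n$ and $M_n\le M_{n+1}$ for all $n$. For positive sequences, $a_m\sim b_m$ ($m\to\infty$) means there are constants $0<c\le C$ with $c\,b_m\le a_m\le C\,b_m$ for all sufficiently large $m$. *)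

theory Defs
  imports "HOL-Analysis.Analysis"
begin

definition memLp :: "real \<Rightarrow> 'a measure \<Rightarrow> ('a \<Rightarrow> real) \<Rightarrow> bool" where
  "memLp r M u \<longleftrightarrow> u \<in> borel_measurable M \<and> integrable M (\<lambda>x. \<bar>u x\<bar> powr r)"

definition Lp_norm :: "real \<Rightarrow> 'a measure \<Rightarrow> ('a \<Rightarrow> real) \<Rightarrow> real" where
  "Lp_norm r M u = (\<integral>x. \<bar>u x\<bar> powr r \<partial>M) powr (1 / r)"

definition pair :: "'a measure \<Rightarrow> ('a \<Rightarrow> real) \<Rightarrow> ('a \<Rightarrow> real) \<Rightarrow> real" where
  "pair M u v = (\<integral>x. u x * v x \<partial>M)"

definition Lp_conv :: "real \<Rightarrow> 'a measure \<Rightarrow> (nat \<Rightarrow> 'a \<Rightarrow> real) \<Rightarrow> ('a \<Rightarrow> real) \<Rightarrow> bool" where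
  "Lp_conv r M s u \<longleftrightarrow> (\<lambda>k. Lp_norm r M (\<lambda>x. u x - s k x)) \<longlonglongrightarrow> 0"

definition schauder_basis_Lp :: "real \<Rightarrow> 'a measure \<Rightarrow> (nat \<Rightarrow> 'a \<Rightarrow> real) \<Rightarrow> bool" where
  "schauder_basis_Lp r M e \<longleftrightarrow>
     (\<forall>n. memLp r M (e n)) \<and>
     (\<forall>u. memLp r M u \<longrightarrow>
        Lp_conv r M (\<lambda>k x. \<Sum>n\<le>k. pair M u (e n) * e n x) u) \<and>
     (\<forall>u c. memLp r M u \<longrightarrow> Lp_conv r M (\<lambda>k x. \<Sum>n\<le>k. c n * e n x) u \<longrightarrow>
        (\<forall>n. c n = pair M u (e n)))"

definition bounded_linear_Lp :: "real \<Rightarrow> 'a measure \<Rightarrow> (('a \<Rightarrow> real) \<Rightarrow> ('a \<Rightarrow> real)) \<Rightarrow> bool" where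
  "bounded_linear_Lp r M A \<longleftrightarrow>
     (\<forall>u. memLp r M u \<longrightarrow> memLp r M (A u)) \<and>
     (\<forall>u v a b. memLp r M u \<longrightarrow> memLp r M v \<longrightarrow>
        (AE x in M. A (\<lambda>y. a * u y + b * v y) x = a * A u x + b * A v x)) \<and>
     (\<exists>C. \<forall>u. memLp r M u \<longrightarrow> Lp_norm r M (A u) \<le> C * Lp_norm r M u)"

text \<open>a_m \<sim> b_m as m \<rightarrow> \<infinity>: c b_m \<le> a_m \<le> C b_m for all large m, with 0 < c \<le> C.\<close>
definition asymp_equiv_seq :: "(nat \<Rightarrow> real) \<Rightarrow> (nat \<Rightarrow> real) \<Rightarrow> bool" where
  "asymp_equiv_seq a b \<longleftrightarrow> (\<exists>c C. 0 < c \<and> c \<le> C \<and>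
     (\<forall>\<^sub>F m in sequentially. c * b m \<le> a m \<and> a m \<le> C * b m))"

end

theory Submission
  imports Defs
begin

text \<open>
  The identity for the coefficients holds because A is continuous on L_p and pairing with e m is
  continuous on L_p, so the coefficient can be passed through the basis expansion of psi.
  Case (i) is just the basis expansion of f = A psi in L_p.

  For (ii) and (iii), split the expansion of f into dyadic blocks of indices in [2^j, 2^(j+1)).
  By biorthogonality the L_2 norm squared of a block is the sum of the squared coefficients,
  at most C^2 2^(j(1 - 2 lam)); by the triangle inequality its L_nu norm is at most
  C D 2^beta 2^(j(1 - lam + beta)). Interpolating (Hoelder) between L_2 and L_nu bounds its
  L_q norm by a constant times 2^(j E) with E < 0 exactly under the stated condition on q
  (automatically in case (iii)). Summing the geometric series shows that the partial sums are
  Cauchy in L_q; since they converge to f in L_p, an a.e. convergent subsequence and Fatou's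
  lemma show that f is in L_q and is their L_q limit.
\<close>

section \<open>Elementary inequalities and L_p norms\<close>

lemma Youngs_inequality_nonneg:
  fixes x y s :: real
  assumes "0 \<le> x" "0 \<le> y" "0 < s" "s < 1"
  shows "x powr s * y powr (1 - s) \<le> s * x + (1 - s) * y"
proof (cases "x = 0 \<or> y = 0")
  case True
  then show ?thesis using assms by auto
next
  case False
  then show ?thesis using Youngs_inequality_0[of s "1 - s" x y] assms by auto
qed

lemma powr_convex_comb_le:
  fixes x y t r :: real
  assumes "1 \<le> r" "0 \<le> t" "t \<le> 1" "0 \<le> x" "0 \<le> y"
  shows "((1 - t) * x + t * y) powr r \<le> (1 - t) * x powr r + t * y powr r"
proof -
  have powr_le_self: "c powr r \<le> c" if "0 \<le> c" "c \<le> 1" for c :: real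
  proof (cases "c = 0")
    case False
    then have "c powr r \<le> c powr 1" using that assms(1) by (intro powr_mono') auto
    then show ?thesis using that by simp
  qed simp
  consider "x = 0" | "y = 0" | "x > 0" "y > 0" using assms by fastforce
  then show ?thesis
  proof cases
    case 1
    then show ?thesis using powr_le_self[of t] assms by (simp add: powr_mult mult_right_mono)
  next
    case 2
    then show ?thesis using powr_le_self[of "1 - t"] assms by (simp add: powr_mult mult_right_mono)
  next
    case 3
    then show ?thesis using convex_onD[OF powr_convex[OF assms(1)], of t x y] assms by simp
  qed
qed

lemma abs_add_powr_le_convex_comb:
  fixes u v a b r :: real
  assumes r: "1 \<le> r" and a: "0 < a" and b: "0 < b"
  shows "\<bar>u + v\<bar> powr r
    \<le> (a + b) powr r * (a / (a + b) * (\<bar>u\<bar> powr r / a powr r) + b / (a + b) * (\<bar>v\<bar> powr r / b powr r))"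
proof -
  have weights: "0 \<le> b / (a + b)" "b / (a + b) \<le> 1" "1 - b / (a + b) = a / (a + b)"
    using a b by (auto simp: field_simps)
  have "a / (a + b) * (\<bar>u\<bar> / a) + b / (a + b) * (\<bar>v\<bar> / b) = \<bar>u\<bar> / (a + b) + \<bar>v\<bar> / (a + b)"
    using a b by simp
  then have split: "\<bar>u\<bar> + \<bar>v\<bar> = (a + b) * (a / (a + b) * (\<bar>u\<bar> / a) + b / (a + b) * (\<bar>v\<bar> / b))"
    using a b by (simp add: add_divide_distrib[symmetric])
  have "\<bar>u + v\<bar> powr r \<le> (\<bar>u\<bar> + \<bar>v\<bar>) powr r" using r by (intro powr_mono2) auto
  also have "\<dots> = (a + b) powr r * (a / (a + b) * (\<bar>u\<bar> / a) + b / (a + b) * (\<bar>v\<bar> / b)) powr r"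
    unfolding split using a b by (subst powr_mult) auto
  also have "\<dots> \<le> (a + b) powr r * (a / (a + b) * (\<bar>u\<bar> / a) powr r + b / (a + b) * (\<bar>v\<bar> / b) powr r)"
    using powr_convex_comb_le[OF r weights(1,2), of "\<bar>u\<bar> / a" "\<bar>v\<bar> / b"] a b
    unfolding weights(3) by (intro mult_left_mono) auto
  finally show ?thesis using a b by (simp add: powr_divide)
qed

lemma integral_powr_mult_powr_le:
  fixes a b :: "'a \<Rightarrow> real"
  assumes ia: "integrable M a" and ib: "integrable M b"
    and a0: "\<And>x. x \<in> space M \<Longrightarrow> 0 \<le> a x" and b0: "\<And>x. x \<in> space M \<Longrightarrow> 0 \<le> b x"
    and s: "0 < s" "s < 1"
  shows "integrable M (\<lambda>x. a x powr s * b x powr (1 - s))"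
    and "(\<integral>x. a x powr s * b x powr (1 - s) \<partial>M) \<le> (\<integral>x. a x \<partial>M) powr s * (\<integral>x. b x \<partial>M) powr (1 - s)"
proof -
  have [measurable]: "a \<in> borel_measurable M" "b \<in> borel_measurable M" using ia ib by auto
  show int: "integrable M (\<lambda>x. a x powr s * b x powr (1 - s))"
  proof (rule Bochner_Integration.integrable_bound[where f="\<lambda>x. s * a x + (1 - s) * b x"])
    show "integrable M (\<lambda>x. s * a x + (1 - s) * b x)" using ia ib by auto
    show "AE x in M. norm (a x powr s * b x powr (1 - s)) \<le> norm (s * a x + (1 - s) * b x)"
      using a0 b0 s Youngs_inequality_nonneg by (intro AE_I2) (auto simp: abs_mult)
  qed measurable
  define A where "A = (\<integral>x. a x \<partial>M)"
  define B where "B = (\<integral>x. b x \<partial>M)"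
  have A0: "A \<ge> 0" and B0: "B \<ge> 0" unfolding A_def B_def using a0 b0 by (simp_all add: integral_nonneg)
  show "(\<integral>x. a x powr s * b x powr (1 - s) \<partial>M) \<le> (\<integral>x. a x \<partial>M) powr s * (\<integral>x. b x \<partial>M) powr (1 - s)"
  proof (cases "A = 0 \<or> B = 0")
    case True
    then have "(AE x in M. a x = 0) \<or> (AE x in M. b x = 0)"
      using integral_nonneg_eq_0_iff_AE[OF ia] integral_nonneg_eq_0_iff_AE[OF ib] a0 b0
      unfolding A_def B_def by auto
    then have "AE x in M. a x powr s * b x powr (1 - s) = 0" by (auto elim: AE_mp)
    then have "(\<integral>x. a x powr s * b x powr (1 - s) \<partial>M) = 0" by (simp add: integral_eq_zero_AE)
    then show ?thesis using A0 B0 by (simp flip: A_def B_def)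
  next
    case False
    then have Ap: "A > 0" and Bp: "B > 0" using A0 B0 by auto
    \<comment> \<open>Young's inequality applied to the normalized functions a/A and b/B\<close>
    have pointwise: "a x powr s * b x powr (1 - s) \<le> A powr s * B powr (1 - s) * (s * (a x / A) + (1 - s) * (b x / B))"
      if "x \<in> space M" for x
    proof -
      have "(a x / A) powr s * (b x / B) powr (1 - s) \<le> s * (a x / A) + (1 - s) * (b x / B)"
        using Youngs_inequality_nonneg[of "a x / A" "b x / B" s] a0 b0 that Ap Bp s by auto
      moreover have "a x powr s * b x powr (1 - s) = A powr s * B powr (1 - s) * ((a x / A) powr s * (b x / B) powr (1 - s))"
        using a0 b0 that Ap Bp by (simp add: powr_divide)
      ultimately show ?thesis using Ap Bp by (metis mult_left_mono powr_ge_zero zero_le_mult_iff)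
    qed
    have "(\<integral>x. a x powr s * b x powr (1 - s) \<partial>M) \<le> (\<integral>x. A powr s * B powr (1 - s) * (s * (a x / A) + (1 - s) * (b x / B)) \<partial>M)"
      using pointwise ia ib int by (intro integral_mono) auto
    also have "\<dots> = A powr s * B powr (1 - s)"
      using ia ib Ap Bp by (simp add: A_def B_def)
    finally show ?thesis by (simp add: A_def B_def)
  qed
qed

lemma Lp_norm_nonneg: "Lp_norm r M u \<ge> 0"
  unfolding Lp_norm_def by simp

lemma Lp_norm_powr:
  assumes "memLp r M u" "r > 0"
  shows "Lp_norm r M u powr r = (\<integral>x. \<bar>u x\<bar> powr r \<partial>M)"
  using assms by (simp add: Lp_norm_def powr_powr integral_nonneg)

lemma Lp_norm_le_iff_integral_powr_le:
  assumes "r > 0" "\<epsilon> \<ge> 0"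
  shows "Lp_norm r M u \<le> \<epsilon> \<longleftrightarrow> (\<integral>x. \<bar>u x\<bar> powr r \<partial>M) \<le> \<epsilon> powr r"
proof -
  have "Lp_norm r M u \<le> \<epsilon> \<longleftrightarrow> Lp_norm r M u powr r \<le> \<epsilon> powr r"
    using powr_mono2[of r "Lp_norm r M u" \<epsilon>] powr_less_mono2[of r \<epsilon> "Lp_norm r M u"]
      assms Lp_norm_nonneg by (meson less_le not_le)
  also have "Lp_norm r M u powr r = (\<integral>x. \<bar>u x\<bar> powr r \<partial>M)"
    using assms by (simp add: Lp_norm_def powr_powr integral_nonneg)
  finally show ?thesis .
qed

lemma Lp_norm_cong_AE:
  assumes "AE x in M. u x = v x" "u \<in> borel_measurable M" "v \<in> borel_measurable M"
  shows "Lp_norm r M u = Lp_norm r M v"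
proof -
  have "(\<integral>x. \<bar>u x\<bar> powr r \<partial>M) = (\<integral>x. \<bar>v x\<bar> powr r \<partial>M)"
    using assms by (intro integral_cong_AE) auto
  then show ?thesis by (simp add: Lp_norm_def)
qed

lemma AE_eq_0_if_Lp_norm_eq_0:
  assumes "memLp r M u" "r > 0" "Lp_norm r M u = 0"
  shows "AE x in M. u x = 0"
proof -
  have i: "integrable M (\<lambda>x. \<bar>u x\<bar> powr r)" using assms unfolding memLp_def by auto
  have "(\<integral>x. \<bar>u x\<bar> powr r \<partial>M) = 0" using assms(3) by (simp add: Lp_norm_def)
  then have "AE x in M. \<bar>u x\<bar> powr r = 0" using integral_nonneg_eq_0_iff_AE[OF i] by auto
  then show ?thesis by auto
qed

lemma Lp_norm_zero [simp]: "Lp_norm r M (\<lambda>x. 0) = 0"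
  unfolding Lp_norm_def by simp

lemma memLp_zero [simp]: "memLp r M (\<lambda>x. 0)"
  unfolding memLp_def by simp

lemma memLp_measurable [measurable_dest]: "memLp r M u \<Longrightarrow> u \<in> borel_measurable M"
  unfolding memLp_def by simp

lemma memLp_cmult:
  assumes "memLp r M u" "r > 0"
  shows "memLp r M (\<lambda>x. c * u x)" and "Lp_norm r M (\<lambda>x. c * u x) = \<bar>c\<bar> * Lp_norm r M u"
proof -
  have split: "\<bar>c * u x\<bar> powr r = \<bar>c\<bar> powr r * \<bar>u x\<bar> powr r" for x
    by (simp add: abs_mult powr_mult)
  show "memLp r M (\<lambda>x. c * u x)" using assms unfolding memLp_def split by auto
  have "(\<integral>x. \<bar>c * u x\<bar> powr r \<partial>M) = \<bar>c\<bar> powr r * (\<integral>x. \<bar>u x\<bar> powr r \<partial>M)"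
    unfolding split by simp
  then show "Lp_norm r M (\<lambda>x. c * u x) = \<bar>c\<bar> * Lp_norm r M u"
    using assms unfolding Lp_norm_def by (simp add: powr_mult powr_powr integral_nonneg)
qed

lemma memLp_mono_exponent:
  assumes "finite_measure M" "memLp r M u" "0 < s" "s \<le> r"
  shows "memLp s M u"
proof -
  have [measurable]: "u \<in> borel_measurable M" using assms(2) by measurable
  have ir: "integrable M (\<lambda>x. \<bar>u x\<bar> powr r)" using assms unfolding memLp_def by auto
  \<comment> \<open>on a finite measure space the constant 1 dominates the small values\<close>
  have bound: "\<bar>u x\<bar> powr s \<le> 1 + \<bar>u x\<bar> powr r" for x
  proof (cases "\<bar>u x\<bar> \<le> 1")
    case True
    then have "\<bar>u x\<bar> powr s \<le> 1" using assms by (intro powr_le1) auto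
    then show ?thesis by (smt (verit) powr_ge_zero)
  next
    case False
    then have "\<bar>u x\<bar> powr s \<le> \<bar>u x\<bar> powr r" using assms by (intro powr_mono) auto
    then show ?thesis by simp
  qed
  have "integrable M (\<lambda>x. \<bar>u x\<bar> powr s)"
  proof (rule Bochner_Integration.integrable_bound[where f="\<lambda>x. 1 + \<bar>u x\<bar> powr r"])
    show "integrable M (\<lambda>x. 1 + \<bar>u x\<bar> powr r)"
      using ir finite_measure.integrable_const[OF assms(1), of "1::real"]
      by (intro Bochner_Integration.integrable_add) auto
  qed (use bound in auto)
  then show ?thesis unfolding memLp_def by auto
qed

lemma Holder_inequality_Lp:
  assumes r: "1 < r" and u: "memLp r M u" and v: "memLp (r / (r - 1)) M v"
  shows "integrable M (\<lambda>x. u x * v x)"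
    and "\<bar>\<integral>x. u x * v x \<partial>M\<bar> \<le> Lp_norm r M u * Lp_norm (r / (r - 1)) M v"
proof -
  define r' where "r' = r / (r - 1)"
  have [measurable]: "u \<in> borel_measurable M" "v \<in> borel_measurable M" using u v by measurable
  have iu: "integrable M (\<lambda>x. \<bar>u x\<bar> powr r)" and iv: "integrable M (\<lambda>x. \<bar>v x\<bar> powr r')"
    using u v unfolding memLp_def r'_def by auto
  have s: "0 < 1 / r" "1 / r < 1" using r by auto
  have eu: "(\<bar>u x\<bar> powr r) powr (1 / r) = \<bar>u x\<bar>" for x using r by (simp add: powr_powr)
  have ev: "(\<bar>v x\<bar> powr r') powr (1 - 1 / r) = \<bar>v x\<bar>" for x
  proof -
    have "r' * (1 - 1 / r) = 1" using r by (simp add: r'_def field_simps)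
    then show ?thesis by (simp add: powr_powr)
  qed
  note H = integral_powr_mult_powr_le[OF iu iv _ _ s, unfolded eu ev]
  show "integrable M (\<lambda>x. u x * v x)"
    using H(1) by (rule Bochner_Integration.integrable_bound) (auto simp: abs_mult)
  have "\<bar>\<integral>x. u x * v x \<partial>M\<bar> \<le> (\<integral>x. \<bar>u x\<bar> * \<bar>v x\<bar> \<partial>M)"
    using integral_abs_bound[of M "\<lambda>x. u x * v x"] by (simp add: abs_mult)
  also have "\<dots> \<le> (\<integral>x. \<bar>u x\<bar> powr r \<partial>M) powr (1 / r) * (\<integral>x. \<bar>v x\<bar> powr r' \<partial>M) powr (1 - 1 / r)"
    using H(2) by simp
  also have "\<dots> = Lp_norm r M u * Lp_norm r' M v"
  proof -
    have "1 / r' = 1 - 1 / r" using r by (simp add: r'_def field_simps)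
    then show ?thesis by (simp add: Lp_norm_def)
  qed
  finally show "\<bar>\<integral>x. u x * v x \<partial>M\<bar> \<le> Lp_norm r M u * Lp_norm (r / (r - 1)) M v"
    by (simp add: r'_def)
qed

lemma memLp_add:
  assumes r: "1 \<le> r" and u: "memLp r M u" and v: "memLp r M v"
  shows "memLp r M (\<lambda>x. u x + v x)"
proof -
  have [measurable]: "u \<in> borel_measurable M" "v \<in> borel_measurable M" using u v by measurable
  have iu: "integrable M (\<lambda>x. \<bar>u x\<bar> powr r)" and iv: "integrable M (\<lambda>x. \<bar>v x\<bar> powr r)"
    using u v unfolding memLp_def by auto
  have bound: "\<bar>u x + v x\<bar> powr r \<le> 2 powr r * (\<bar>u x\<bar> powr r + \<bar>v x\<bar> powr r)" for x
  proof -
    have "\<bar>u x + v x\<bar> powr r \<le> (2 * max \<bar>u x\<bar> \<bar>v x\<bar>) powr r"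
      using r by (intro powr_mono2) auto
    also have "\<dots> = 2 powr r * max \<bar>u x\<bar> \<bar>v x\<bar> powr r" by (simp add: powr_mult)
    also have "\<dots> \<le> 2 powr r * (\<bar>u x\<bar> powr r + \<bar>v x\<bar> powr r)"
      by (intro mult_left_mono) (auto simp: max_def)
    finally show ?thesis .
  qed
  have "integrable M (\<lambda>x. \<bar>u x + v x\<bar> powr r)"
    by (rule Bochner_Integration.integrable_bound[where f="\<lambda>x. 2 powr r * (\<bar>u x\<bar> powr r + \<bar>v x\<bar> powr r)"])
       (use iu iv bound in auto)
  then show ?thesis unfolding memLp_def by auto
qed

lemma Minkowski_inequality_Lp:
  assumes r: "1 \<le> r" and u: "memLp r M u" and v: "memLp r M v"
  shows "Lp_norm r M (\<lambda>x. u x + v x) \<le> Lp_norm r M u + Lp_norm r M v"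
proof -
  have [measurable]: "u \<in> borel_measurable M" "v \<in> borel_measurable M" using u v by measurable
  define a where "a = Lp_norm r M u"
  define b where "b = Lp_norm r M v"
  consider "a = 0" | "b = 0" | "a > 0" "b > 0"
    using Lp_norm_nonneg unfolding a_def b_def by (metis less_eq_real_def)
  then show ?thesis
  proof cases
    case 1
    then have "AE x in M. u x + v x = v x" using AE_eq_0_if_Lp_norm_eq_0[OF u] r by (auto simp: a_def)
    then have "Lp_norm r M (\<lambda>x. u x + v x) = b" unfolding b_def by (intro Lp_norm_cong_AE) auto
    then show ?thesis using 1 by (simp add: a_def b_def)
  next
    case 2
    then have "AE x in M. u x + v x = u x" using AE_eq_0_if_Lp_norm_eq_0[OF v] r by (auto simp: b_def)
    then have "Lp_norm r M (\<lambda>x. u x + v x) = a" unfolding a_def by (intro Lp_norm_cong_AE) auto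
    then show ?thesis using 2 by (simp add: a_def b_def)
  next
    case 3
    have iu: "integrable M (\<lambda>x. \<bar>u x\<bar> powr r)" and iv: "integrable M (\<lambda>x. \<bar>v x\<bar> powr r)"
      using u v unfolding memLp_def by auto
    have iuv: "integrable M (\<lambda>x. \<bar>u x + v x\<bar> powr r)" using memLp_add[OF r u v] unfolding memLp_def by auto
    have "(\<integral>x. \<bar>u x + v x\<bar> powr r \<partial>M)
        \<le> (\<integral>x. (a + b) powr r * (a / (a + b) * (\<bar>u x\<bar> powr r / a powr r) + b / (a + b) * (\<bar>v x\<bar> powr r / b powr r)) \<partial>M)"
      using 3 r iu iv iuv by (intro integral_mono abs_add_powr_le_convex_comb) auto
    also have "\<dots> = (a + b) powr r * (a / (a + b) * ((\<integral>x. \<bar>u x\<bar> powr r \<partial>M) / a powr r)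
        + b / (a + b) * ((\<integral>x. \<bar>v x\<bar> powr r \<partial>M) / b powr r))"
      using iu iv by simp
    also have "\<dots> = (a + b) powr r * (a / (a + b) + b / (a + b))"
    proof -
      have "(\<integral>x. \<bar>u x\<bar> powr r \<partial>M) = a powr r" "(\<integral>x. \<bar>v x\<bar> powr r \<partial>M) = b powr r"
        using r Lp_norm_powr[OF u] Lp_norm_powr[OF v] by (auto simp: a_def b_def)
      then show ?thesis using 3 by simp
    qed
    also have "\<dots> = (a + b) powr r"
      using 3 by (simp add: add_divide_distrib[symmetric])
    finally show ?thesis
      using 3 r by (simp add: Lp_norm_le_iff_integral_powr_le a_def b_def)
  qed
qed

lemma memLp_diff:
  assumes r: "1 \<le> r" and u: "memLp r M u" and v: "memLp r M v"
  shows "memLp r M (\<lambda>x. u x - v x)"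
  using memLp_add[OF r u memLp_cmult(1)[OF v, of "-1"]] r by simp

lemma memLp_sum:
  assumes r: "1 \<le> r" and "\<And>i. i \<in> I \<Longrightarrow> memLp r M (u i)"
  shows "memLp r M (\<lambda>x. \<Sum>i\<in>I. u i x)"
    and "Lp_norm r M (\<lambda>x. \<Sum>i\<in>I. u i x) \<le> (\<Sum>i\<in>I. Lp_norm r M (u i))"
proof -
  have "memLp r M (\<lambda>x. \<Sum>i\<in>I. u i x) \<and> Lp_norm r M (\<lambda>x. \<Sum>i\<in>I. u i x) \<le> (\<Sum>i\<in>I. Lp_norm r M (u i))"
    using assms(2)
  proof (induction I rule: infinite_finite_induct)
    case (insert i F)
    then have "memLp r M (u i)" "memLp r M (\<lambda>x. \<Sum>i\<in>F. u i x)"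
      and "Lp_norm r M (\<lambda>x. \<Sum>i\<in>F. u i x) \<le> (\<Sum>i\<in>F. Lp_norm r M (u i))"
      by auto
    then show ?case
      using insert memLp_add[OF r] Minkowski_inequality_Lp[OF r] by fastforce
  qed simp_all
  then show "memLp r M (\<lambda>x. \<Sum>i\<in>I. u i x)"
    and "Lp_norm r M (\<lambda>x. \<Sum>i\<in>I. u i x) \<le> (\<Sum>i\<in>I. Lp_norm r M (u i))" by auto
qed

lemma memLp_sum_cmult:
  assumes "1 \<le> r" "\<And>i. memLp r M (u i)"
  shows "memLp r M (\<lambda>x. \<Sum>i\<in>I. c i * u i x)"
  by (rule memLp_sum(1)[OF assms(1)]) (use assms in \<open>auto intro: memLp_cmult(1)\<close>)

lemma Lp_interpolation:
  assumes fin: "finite_measure M" and nu: "2 < \<nu>" and q: "2 \<le> q" "q < \<nu>"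
    and g: "memLp \<nu> M g"
    and X: "(\<integral>x. \<bar>g x\<bar> powr 2 \<partial>M) \<le> X" and Y: "(\<integral>x. \<bar>g x\<bar> powr \<nu> \<partial>M) \<le> Y"
    and Xp: "0 < X" and Yp: "0 < Y"
  shows "(\<integral>x. \<bar>g x\<bar> powr q \<partial>M) \<le> X powr ((\<nu> - q) / (\<nu> - 2)) * Y powr ((q - 2) / (\<nu> - 2))"
proof (cases "q = 2")
  case True
  then show ?thesis using X Yp Xp nu by simp
next
  case False
  define s where "s = (\<nu> - q) / (\<nu> - 2)"
  have s1: "1 - s = (q - 2) / (\<nu> - 2)" using nu by (simp add: s_def field_simps)
  have s: "0 < s" "s < 1" using False q nu by (auto simp: s_def field_simps)
  have "memLp 2 M g" using memLp_mono_exponent[OF fin g] nu by simp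
  then have ia: "integrable M (\<lambda>x. \<bar>g x\<bar> powr 2)" and ib: "integrable M (\<lambda>x. \<bar>g x\<bar> powr \<nu>)"
    using g unfolding memLp_def by blast+
  have "2 * s + \<nu> * (1 - s) = (2 * (\<nu> - q) + \<nu> * (q - 2)) / (\<nu> - 2)"
    unfolding s1 unfolding s_def by (simp add: add_divide_distrib)
  also have "2 * (\<nu> - q) + \<nu> * (q - 2) = q * (\<nu> - 2)" by (simp add: algebra_simps)
  finally have exponent: "2 * s + \<nu> * (1 - s) = q" using nu by simp
  have "(\<bar>g x\<bar> powr 2) powr s * (\<bar>g x\<bar> powr \<nu>) powr (1 - s) = \<bar>g x\<bar> powr q" for x
    by (simp only: powr_powr powr_add[symmetric] exponent)
  then have "(\<integral>x. \<bar>g x\<bar> powr q \<partial>M) \<le> (\<integral>x. \<bar>g x\<bar> powr 2 \<partial>M) powr s * (\<integral>x. \<bar>g x\<bar> powr \<nu> \<partial>M) powr (1 - s)"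
    using integral_powr_mult_powr_le(2)[OF ia ib _ _ s] by simp
  also have "\<dots> \<le> X powr s * Y powr (1 - s)"
    using X Y s by (intro mult_mono powr_mono2) (auto simp: integral_nonneg)
  finally show ?thesis by (simp only: s1) (simp add: s_def)
qed

lemma integral_powr_le_if_AE_tendsto:
  fixes g :: "'a \<Rightarrow> real" and h :: "nat \<Rightarrow> 'a \<Rightarrow> real"
  assumes [measurable]: "g \<in> borel_measurable M" "\<And>j. h j \<in> borel_measurable M"
    and conv: "AE x in M. (\<lambda>j. h j x) \<longlonglongrightarrow> g x" and q: "q > 0"
    and ih: "\<And>j. integrable M (\<lambda>x. \<bar>h j x\<bar> powr q)"
    and bound: "\<And>j. (\<integral>x. \<bar>h j x\<bar> powr q \<partial>M) \<le> B"
  shows "integrable M (\<lambda>x. \<bar>g x\<bar> powr q)" and "(\<integral>x. \<bar>g x\<bar> powr q \<partial>M) \<le> B"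
proof -
  have "AE x in M. ennreal (\<bar>g x\<bar> powr q) = liminf (\<lambda>j. ennreal (\<bar>h j x\<bar> powr q))"
    using conv
  proof eventually_elim
    case (elim x)
    have "(\<lambda>j. \<bar>h j x\<bar> powr q) \<longlonglongrightarrow> \<bar>g x\<bar> powr q"
      using q by (intro tendsto_intros elim) auto
    then show ?case by (intro lim_imp_Liminf[symmetric] tendsto_ennrealI) auto
  qed
  then have "(\<integral>\<^sup>+x. ennreal (\<bar>g x\<bar> powr q) \<partial>M) = (\<integral>\<^sup>+x. liminf (\<lambda>j. ennreal (\<bar>h j x\<bar> powr q)) \<partial>M)"
    by (intro nn_integral_cong_AE) auto
  also have "\<dots> \<le> liminf (\<lambda>j. \<integral>\<^sup>+x. ennreal (\<bar>h j x\<bar> powr q) \<partial>M)"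
    by (intro nn_integral_liminf) auto
  also have "\<dots> = liminf (\<lambda>j. ennreal (\<integral>x. \<bar>h j x\<bar> powr q \<partial>M))"
    using ih by (subst nn_integral_eq_integral) auto
  also have "\<dots> \<le> ennreal B"
    using bound by (intro Liminf_le) (auto intro!: always_eventually ennreal_leI)
  finally have le: "(\<integral>\<^sup>+x. ennreal (\<bar>g x\<bar> powr q) \<partial>M) \<le> ennreal B" .
  then show ig: "integrable M (\<lambda>x. \<bar>g x\<bar> powr q)"
    by (subst integrable_iff_bounded) (auto simp: top_unique intro: le_less_trans[OF le])
  have "0 \<le> (\<integral>x. \<bar>h 0 x\<bar> powr q \<partial>M)" by (rule Bochner_Integration.integral_nonneg) simp
  then have "0 \<le> B" using bound[of 0] by linarith
  moreover have "ennreal (\<integral>x. \<bar>g x\<bar> powr q \<partial>M) \<le> ennreal B"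
    using le ig by (subst (asm) nn_integral_eq_integral) auto
  ultimately show "(\<integral>x. \<bar>g x\<bar> powr q \<partial>M) \<le> B" by (simp add: ennreal_le_iff)
qed

lemma integral_abs_le_Lp_norm:
  assumes fin: "finite_measure M" and r: "1 < r" and g: "memLp r M g"
  shows "integrable M g"
    and "(\<integral>x. \<bar>g x\<bar> \<partial>M) \<le> Lp_norm r M g * measure M (space M) powr (1 - 1 / r)"
proof -
  have [measurable]: "g \<in> borel_measurable M" using g by measurable
  have ia: "integrable M (\<lambda>x. \<bar>g x\<bar> powr r)" using g unfolding memLp_def by auto
  have ib: "integrable M (\<lambda>x. 1::real)" using finite_measure.integrable_const[OF fin] by auto
  have s: "0 < 1 / r" "1 / r < 1" using r by auto
  have "(\<bar>g x\<bar> powr r) powr (1 / r) * 1 powr (1 - 1 / r) = \<bar>g x\<bar>" for x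
    using r by (simp add: powr_powr)
  note H = integral_powr_mult_powr_le[OF ia ib _ _ s, unfolded this]
  show "integrable M g" using H(1) by (simp add: integrable_abs_iff)
  show "(\<integral>x. \<bar>g x\<bar> \<partial>M) \<le> Lp_norm r M g * measure M (space M) powr (1 - 1 / r)"
    using H(2) by (simp add: Lp_norm_def)
qed

lemma Lp_conv_AE_subseq:
  assumes fin: "finite_measure M" and r: "1 < r" and s: "\<And>k. memLp r M (s k)" and g: "memLp r M g"
    and conv: "Lp_conv r M s g"
  obtains \<rho> :: "nat \<Rightarrow> nat" where "strict_mono \<rho>" "AE x in M. (\<lambda>j. s (\<rho> j) x) \<longlonglongrightarrow> g x"
proof -
  define C where "C = measure M (space M) powr (1 - 1 / r)"
  have d: "memLp r M (\<lambda>x. g x - s k x)" for k using memLp_diff[OF _ g s] r by auto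
  have integrable: "integrable M (\<lambda>x. s k x - g x)" for k
    using Bochner_Integration.integrable_minus[OF integral_abs_le_Lp_norm(1)[OF fin r d[of k]]] by simp
  have lim: "(\<lambda>k. Lp_norm r M (\<lambda>x. g x - s k x) * C) \<longlonglongrightarrow> 0"
    using conv unfolding Lp_conv_def by (rule tendsto_mult_left_zero)
  have bound: "norm (\<integral>x. norm (s k x - g x) \<partial>M) \<le> Lp_norm r M (\<lambda>x. g x - s k x) * C" for k
  proof -
    have "(\<integral>x. norm (s k x - g x) \<partial>M) = (\<integral>x. \<bar>g x - s k x\<bar> \<partial>M)"
      by (intro Bochner_Integration.integral_cong) auto
    moreover have "0 \<le> (\<integral>x. \<bar>g x - s k x\<bar> \<partial>M)" by (rule Bochner_Integration.integral_nonneg) simp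
    ultimately show ?thesis
      using integral_abs_le_Lp_norm(2)[OF fin r d[of k]] unfolding C_def by simp
  qed
  have "(\<lambda>k. \<integral>x. norm (s k x - g x) \<partial>M) \<longlonglongrightarrow> 0"
    by (rule Lim_null_comparison[OF _ lim]) (use bound in \<open>auto intro: always_eventually\<close>)
  from tendsto_L1_AE_subseq[OF integrable this] obtain \<rho> where
    "strict_mono \<rho>" "AE x in M. (\<lambda>j. s (\<rho> j) x - g x) \<longlonglongrightarrow> 0" by auto
  then show ?thesis using that by (simp add: LIM_zero_iff)
qed

text \<open>An a.e. convergent subsequence and Fatou's lemma identify the L_q limit with the L_p limit.\<close>
lemma Lp_conv_if_uniformly_Cauchy:
  assumes fin: "finite_measure M" and p: "1 < p" and q: "1 \<le> q"
    and sp: "\<And>k. memLp p M (s k)" and sq: "\<And>k. memLp q M (s k)"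
    and f: "memLp p M f" and conv: "Lp_conv p M s f"
    and Cauchy: "\<And>\<epsilon>. \<epsilon> > 0 \<Longrightarrow> \<exists>k0. \<forall>k\<ge>k0. \<forall>n\<ge>k. Lp_norm q M (\<lambda>x. s n x - s k x) \<le> \<epsilon>"
  shows "memLp q M f" and "Lp_conv q M s f"
proof -
  have [measurable]: "f \<in> borel_measurable M" "\<And>k. s k \<in> borel_measurable M"
    using f sq by measurable
  obtain \<rho> :: "nat \<Rightarrow> nat" where \<rho>: "strict_mono \<rho>" and ae: "AE x in M. (\<lambda>j. s (\<rho> j) x) \<longlonglongrightarrow> f x"
    using Lp_conv_AE_subseq[OF fin p sp f conv] by blast
  have tail: "memLp q M (\<lambda>x. f x - s k x) \<and> Lp_norm q M (\<lambda>x. f x - s k x) \<le> \<epsilon>"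
    if \<epsilon>: "\<epsilon> > 0" and k: "\<forall>k\<ge>k0. \<forall>n\<ge>k. Lp_norm q M (\<lambda>x. s n x - s k x) \<le> \<epsilon>" "k0 \<le> k" for \<epsilon> k0 k
  proof -
    define h where "h j = (\<lambda>x. s (\<rho> (j + k)) x - s k x)" for j
    have hk: "k \<le> \<rho> (j + k)" for j using seq_suble[OF \<rho>, of "j + k"] by simp
    have lim: "AE x in M. (\<lambda>j. h j x) \<longlonglongrightarrow> f x - s k x"
      using ae
    proof eventually_elim
      case (elim x)
      have "(\<lambda>j. s (\<rho> (j + k)) x) \<longlonglongrightarrow> f x" using LIMSEQ_ignore_initial_segment[OF elim, of k] by simp
      then show ?case unfolding h_def by (intro tendsto_diff tendsto_const)
    qed
    have "memLp q M (h j)" for j unfolding h_def using memLp_diff[OF q sq sq] .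
    then have [measurable]: "h j \<in> borel_measurable M" and int: "integrable M (\<lambda>x. \<bar>h j x\<bar> powr q)" for j
      unfolding memLp_def by auto
    have bound: "(\<integral>x. \<bar>h j x\<bar> powr q \<partial>M) \<le> \<epsilon> powr q" for j
    proof -
      have "Lp_norm q M (h j) \<le> \<epsilon>" using k hk[of j] unfolding h_def by blast
      then show ?thesis using Lp_norm_le_iff_integral_powr_le[of q \<epsilon> M "h j"] q \<epsilon> by simp
    qed
    note Fatou = integral_powr_le_if_AE_tendsto[OF _ _ lim _ int bound]
    have "integrable M (\<lambda>x. \<bar>f x - s k x\<bar> powr q)" "(\<integral>x. \<bar>f x - s k x\<bar> powr q \<partial>M) \<le> \<epsilon> powr q"
      using q by (auto intro: Fatou)
    then show ?thesis using q \<epsilon> by (simp add: memLp_def Lp_norm_le_iff_integral_powr_le)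
  qed
  obtain k0 where "\<forall>k\<ge>k0. \<forall>n\<ge>k. Lp_norm q M (\<lambda>x. s n x - s k x) \<le> 1"
    using Cauchy[of 1] by auto
  with tail[of 1 k0 k0] have "memLp q M (\<lambda>x. f x - s k0 x)" by auto
  from memLp_add[OF q this sq[of k0]] show "memLp q M f" by simp
  show "Lp_conv q M s f"
    unfolding Lp_conv_def
  proof (rule LIMSEQ_I)
    fix \<epsilon> :: real assume "0 < \<epsilon>"
    then obtain k0 where k0: "\<forall>k\<ge>k0. \<forall>n\<ge>k. Lp_norm q M (\<lambda>x. s n x - s k x) \<le> \<epsilon> / 2"
      using Cauchy[of "\<epsilon> / 2"] by auto
    show "\<exists>k0. \<forall>k\<ge>k0. norm (Lp_norm q M (\<lambda>x. f x - s k x) - 0) < \<epsilon>"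
    proof (intro exI allI impI)
      fix k assume "k0 \<le> k"
      then have "Lp_norm q M (\<lambda>x. f x - s k x) \<le> \<epsilon> / 2" using tail[of "\<epsilon> / 2" k0 k] k0 \<open>0 < \<epsilon>\<close> by auto
      then show "norm (Lp_norm q M (\<lambda>x. f x - s k x) - 0) < \<epsilon>" using \<open>0 < \<epsilon>\<close> by (simp add: abs_of_nonneg[OF Lp_norm_nonneg])
    qed
  qed
qed

section \<open>Schauder bases and bounded operators\<close>

lemma schauder_basis_Lp_memLp: "schauder_basis_Lp r M e \<Longrightarrow> memLp r M (e n)"
  unfolding schauder_basis_Lp_def by blast

lemma schauder_basis_Lp_expansion:
  "schauder_basis_Lp r M e \<Longrightarrow> memLp r M u \<Longrightarrow> Lp_conv r M (\<lambda>k x. \<Sum>n\<le>k. pair M u (e n) * e n x) u"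
  unfolding schauder_basis_Lp_def by blast

lemma schauder_basis_Lp_biorthogonal:
  assumes b: "schauder_basis_Lp r M e"
  shows "pair M (e m) (e n) = (if n = m then 1 else 0)"
proof -
  define c where "c = (\<lambda>n. if n = m then 1 else (0::real))"
  have "(\<Sum>n\<le>k. c n * e n x) = (\<Sum>n\<le>k. if n = m then e n x else 0)" for k x
    by (rule sum.cong) (auto simp: c_def)
  then have sum_eq: "(\<Sum>n\<le>k. c n * e n x) = e m x" if "m \<le> k" for k x
    using that by simp
  have "\<forall>\<^sub>F k in sequentially. Lp_norm r M (\<lambda>x. e m x - (\<Sum>n\<le>k. c n * e n x)) = 0"
    using eventually_ge_at_top[of m] by eventually_elim (simp add: sum_eq)
  then have "Lp_conv r M (\<lambda>k x. \<Sum>n\<le>k. c n * e n x) (e m)"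
    unfolding Lp_conv_def by (rule tendsto_eventually)
  then show ?thesis
    using b schauder_basis_Lp_memLp[OF b] unfolding schauder_basis_Lp_def by (auto simp: c_def)
qed

lemma integral_sq_sum_biorthogonal:
  assumes "finite F"
    and "\<And>m n. integrable M (\<lambda>x. e m x * e n x)"
    and "\<And>m n. pair M (e m) (e n) = (if n = m then 1 else 0)"
  shows "(\<integral>x. \<bar>\<Sum>m\<in>F. c m * e m x\<bar> powr 2 \<partial>M) = (\<Sum>m\<in>F. (c m)\<^sup>2)"
proof -
  have sq: "\<bar>y\<bar> powr 2 = y * y" for y :: real
    by (cases "y = 0") (auto simp: powr_numeral power2_eq_square)
  have "(\<integral>x. \<bar>\<Sum>m\<in>F. c m * e m x\<bar> powr 2 \<partial>M)
      = (\<integral>x. (\<Sum>m\<in>F. \<Sum>n\<in>F. c m * c n * (e m x * e n x)) \<partial>M)"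
    unfolding sq sum_product by (simp add: algebra_simps)
  also have "\<dots> = (\<Sum>m\<in>F. \<Sum>n\<in>F. c m * c n * pair M (e m) (e n))"
    using assms(2) by (simp add: pair_def)
  also have "\<dots> = (\<Sum>m\<in>F. (c m)\<^sup>2)"
    unfolding assms(3) using assms(1) by (simp add: power2_eq_square if_distrib cong: if_cong)
  finally show ?thesis .
qed

lemma bounded_linear_Lp_memLp: "bounded_linear_Lp p M A \<Longrightarrow> memLp p M u \<Longrightarrow> memLp p M (A u)"
  unfolding bounded_linear_Lp_def by blast

lemma bounded_linear_Lp_linear:
  "bounded_linear_Lp p M A \<Longrightarrow> memLp p M u \<Longrightarrow> memLp p M v \<Longrightarrow>
    AE x in M. A (\<lambda>y. a * u y + b * v y) x = a * A u x + b * A v x"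
  unfolding bounded_linear_Lp_def by blast

lemma bounded_linear_Lp_sum:
  fixes e :: "nat \<Rightarrow> 'a \<Rightarrow> real" and k :: nat
  assumes A: "bounded_linear_Lp p M A" and p: "1 \<le> p" and e: "\<And>n. memLp p M (e n)"
  shows "AE x in M. A (\<lambda>y. \<Sum>n\<le>k. c n * e n y) x = (\<Sum>n\<le>k. c n * A (e n) x)"
proof (induction k)
  case 0
  show ?case using bounded_linear_Lp_linear[OF A e e, of "c 0" 0 0 0] by simp
next
  case (Suc k)
  have "memLp p M (\<lambda>y. \<Sum>n\<le>k. c n * e n y)" using memLp_sum_cmult[OF p e] .
  from bounded_linear_Lp_linear[OF A this e, of 1 "c (Suc k)" "Suc k"] Suc
  show ?case by eventually_elim simp
qed

lemma bounded_linear_Lp_conv: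
  assumes A: "bounded_linear_Lp p M A" and p: "1 \<le> p"
    and s: "\<And>k. memLp p M (s k)" and u: "memLp p M u" and conv: "Lp_conv p M s u"
  shows "Lp_conv p M (\<lambda>k. A (s k)) (A u)"
proof -
  obtain C where C: "\<And>v. memLp p M v \<Longrightarrow> Lp_norm p M (A v) \<le> C * Lp_norm p M v"
    using A unfolding bounded_linear_Lp_def by blast
  have d: "memLp p M (\<lambda>x. u x - s k x)" for k using memLp_diff[OF p u s] .
  have [measurable]: "A v \<in> borel_measurable M" if "memLp p M v" for v
    using bounded_linear_Lp_memLp[OF A that] by measurable
  have "Lp_norm p M (\<lambda>x. A u x - A (s k) x) = Lp_norm p M (A (\<lambda>x. u x - s k x))" for k
  proof (rule Lp_norm_cong_AE)
    show "AE x in M. A u x - A (s k) x = A (\<lambda>x. u x - s k x) x"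
      using bounded_linear_Lp_linear[OF A u s, of 1 "-1" k] by eventually_elim simp
  qed (use u s d in measurable)
  then have bound: "norm (Lp_norm p M (\<lambda>x. A u x - A (s k) x)) \<le> C * Lp_norm p M (\<lambda>x. u x - s k x)" for k
    using C[OF d] by (simp add: Lp_norm_nonneg)
  have lim: "(\<lambda>k. C * Lp_norm p M (\<lambda>x. u x - s k x)) \<longlonglongrightarrow> 0"
    using conv unfolding Lp_conv_def by (rule tendsto_mult_right_zero)
  show ?thesis
    unfolding Lp_conv_def
    by (rule Lim_null_comparison[OF _ lim]) (use bound in \<open>auto intro: always_eventually\<close>)
qed

lemma pair_tendsto_if_Lp_conv:
  assumes p: "1 < p" and s: "\<And>k. memLp p M (s k)" and u: "memLp p M u"
    and v: "memLp (p / (p - 1)) M v" and conv: "Lp_conv p M s u"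
  shows "(\<lambda>k. pair M (s k) v) \<longlonglongrightarrow> pair M u v"
proof -
  have d: "memLp p M (\<lambda>x. u x - s k x)" for k using memLp_diff[OF _ u s] p by simp
  have "pair M u v - pair M (s k) v = (\<integral>x. (u x - s k x) * v x \<partial>M)" for k
    using Holder_inequality_Lp(1)[OF p u v] Holder_inequality_Lp(1)[OF p s v]
    by (simp add: pair_def left_diff_distrib)
  then have bound: "norm (pair M u v - pair M (s k) v) \<le> Lp_norm p M (\<lambda>x. u x - s k x) * Lp_norm (p / (p - 1)) M v" for k
    using Holder_inequality_Lp(2)[OF p d v] by simp
  have lim: "(\<lambda>k. Lp_norm p M (\<lambda>x. u x - s k x) * Lp_norm (p / (p - 1)) M v) \<longlonglongrightarrow> 0"
    using conv unfolding Lp_conv_def by (rule tendsto_mult_left_zero)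
  have "(\<lambda>k. pair M u v - pair M (s k) v) \<longlonglongrightarrow> 0"
    by (rule Lim_null_comparison[OF _ lim]) (use bound in \<open>auto intro: always_eventually\<close>)
  from tendsto_minus[OF this] have "(\<lambda>k. pair M (s k) v - pair M u v) \<longlonglongrightarrow> 0"
    by simp
  then show ?thesis by (simp add: LIM_zero_iff)
qed

text \<open>Continuity of A on L_p and of the pairing with e m passes the coefficient through the
  basis expansion of u.\<close>
lemma pair_bounded_linear_Lp_eq_suminf:
  assumes p: "1 < p" and b: "schauder_basis_Lp p M e" and b': "schauder_basis_Lp (p / (p - 1)) M e"
    and A: "bounded_linear_Lp p M A" and u: "memLp p M u"
  shows "pair M (A u) (e m) = (\<Sum>n. pair M u (e n) * pair M (e m) (A (e n)))"
proof -
  have e: "\<And>n. memLp p M (e n)" and e': "\<And>n. memLp (p / (p - 1)) M (e n)"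
    using schauder_basis_Lp_memLp[OF b] schauder_basis_Lp_memLp[OF b'] by auto
  define S where "S k = (\<lambda>y. \<Sum>n\<le>k. pair M u (e n) * e n y)" for k
  have p1: "1 \<le> p" using p by simp
  have S: "memLp p M (S k)" for k unfolding S_def using memLp_sum_cmult[OF p1 e] .
  have AS: "memLp p M (A (S k))" for k using bounded_linear_Lp_memLp[OF A S] .
  have "Lp_conv p M (\<lambda>k. A (S k)) (A u)"
    using bounded_linear_Lp_conv[OF A p1 S u] schauder_basis_Lp_expansion[OF b u] by (simp add: S_def)
  then have lim: "(\<lambda>k. pair M (A (S k)) (e m)) \<longlonglongrightarrow> pair M (A u) (e m)"
    by (rule pair_tendsto_if_Lp_conv[OF p AS bounded_linear_Lp_memLp[OF A u] e'])
  have [measurable]: "A (S k) \<in> borel_measurable M" "A (e n) \<in> borel_measurable M" "e n \<in> borel_measurable M" for k n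
    using AS bounded_linear_Lp_memLp[OF A e] e by (auto simp: memLp_def)
  have "pair M (A (S k)) (e m) = (\<Sum>n\<le>k. pair M u (e n) * pair M (e m) (A (e n)))" for k
  proof -
    have "AE x in M. A (S k) x * e m x = (\<Sum>n\<le>k. pair M u (e n) * (A (e n) x * e m x))"
      using bounded_linear_Lp_sum[where e=e and c="\<lambda>n. pair M u (e n)" and k=k, OF A p1 e]
      unfolding S_def
      by eventually_elim (simp add: sum_distrib_right mult.assoc)
    then have "pair M (A (S k)) (e m) = (\<integral>x. (\<Sum>n\<le>k. pair M u (e n) * (A (e n) x * e m x)) \<partial>M)"
      unfolding pair_def by (intro integral_cong_AE) auto
    also have "\<dots> = (\<Sum>n\<le>k. pair M u (e n) * (\<integral>x. A (e n) x * e m x \<partial>M))"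
      using Holder_inequality_Lp(1)[OF p bounded_linear_Lp_memLp[OF A e] e'] by simp
    also have "\<dots> = (\<Sum>n\<le>k. pair M u (e n) * pair M (e m) (A (e n)))"
      unfolding pair_def by (simp only: mult.commute[of "A _ _"])
    finally show ?thesis .
  qed
  with lim have "(\<lambda>n. pair M u (e n) * pair M (e m) (A (e n))) sums pair M (A u) (e m)"
    unfolding sums_def by (simp add: LIMSEQ_lessThan_iff_atMost)
  then show ?thesis by (simp add: sums_unique)
qed

section \<open>Dyadic blocks of a decaying expansion\<close>

lemma powr_interpolation_rearrange:
  fixes X Z J a1 a2 s t \<nu> q :: real
  assumes "0 < X" "0 < Z" "0 < J"
  shows "((X * J powr a1) powr s * ((Z * J powr a2) powr \<nu>) powr t) powr (1 / q)
    = (X powr s * Z powr (\<nu> * t)) powr (1 / q) * J powr ((a1 * s + a2 * \<nu> * t) / q)"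
proof -
  have "(X * J powr a1) powr s * ((Z * J powr a2) powr \<nu>) powr t
      = (X powr s * Z powr (\<nu> * t)) * J powr (a1 * s + a2 * \<nu> * t)"
    using assms by (simp add: powr_mult powr_powr powr_add mult_ac)
  then show ?thesis
    using assms by (simp add: powr_mult powr_powr add_divide_distrib powr_add)
qed

locale decaying_expansion =
  fixes M :: "'a measure" and e :: "nat \<Rightarrow> 'a \<Rightarrow> real" and c :: "nat \<Rightarrow> real"
    and \<nu> q C D lam \<beta> :: real and m0 :: nat
  assumes fin: "finite_measure M"
    and nu: "2 < \<nu>" and q: "2 \<le> q" and q_less_nu: "q < \<nu>"
    and e_nu: "\<And>n. memLp \<nu> M (e n)"
    and integrable_e_mult: "\<And>m n. integrable M (\<lambda>x. e m x * e n x)"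
    and biorthogonal: "\<And>m n. pair M (e m) (e n) = (if n = m then 1 else 0)"
    and C: "0 < C" and D: "0 < D" and lam: "0 \<le> lam" and beta: "0 \<le> \<beta>"
    and coeff_decay: "\<And>m. m0 \<le> m \<Longrightarrow> \<bar>c m\<bar> \<le> C * real m powr (- lam)"
    and norm_growth: "\<And>m. m0 \<le> m \<Longrightarrow> Lp_norm \<nu> M (e m) \<le> D * real m powr \<beta>"
    and exponents: "q * (\<nu> * (\<beta> + 1 - lam) + 2 * lam - 1) < \<nu> * (2 * \<beta> + 1)"
begin

definition block :: "nat \<Rightarrow> nat \<Rightarrow> 'a \<Rightarrow> real" where
  "block k n = (\<lambda>x. \<Sum>m\<in>{k<..n}. c m * e m x)"

text \<open>theta is the weight of L_2 when L_q is interpolated between L_2 and L_nu.\<close>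
definition "theta = (\<nu> - q) / (\<nu> - 2)"

text \<open>On a dyadic block of length J the L_q norm is at most block_const * J powr block_exp.\<close>
definition "block_exp = ((1 - 2 * lam) * theta + (1 - lam + \<beta>) * \<nu> * (1 - theta)) / q"
definition "block_const = ((C\<^sup>2) powr theta * (C * D * 2 powr \<beta>) powr (\<nu> * (1 - theta))) powr (1 / q)"

lemma one_minus_theta: "1 - theta = (q - 2) / (\<nu> - 2)"
  using nu by (simp add: theta_def field_simps)

lemma block_exp_neg: "block_exp < 0"
proof -
  have "(1 - 2 * lam) * theta + (1 - lam + \<beta>) * \<nu> * (1 - theta)
      = ((1 - 2 * lam) * (\<nu> - q) + (1 - lam + \<beta>) * \<nu> * (q - 2)) / (\<nu> - 2)"
    unfolding one_minus_theta unfolding theta_def by (simp add: add_divide_distrib)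
  also have "(1 - 2 * lam) * (\<nu> - q) + (1 - lam + \<beta>) * \<nu> * (q - 2)
      = q * (\<nu> * (\<beta> + 1 - lam) + 2 * lam - 1) - \<nu> * (2 * \<beta> + 1)"
    by (simp add: algebra_simps)
  finally have "(1 - 2 * lam) * theta + (1 - lam + \<beta>) * \<nu> * (1 - theta) < 0"
    using exponents nu by (simp add: divide_neg_pos)
  then show ?thesis
    using q unfolding block_exp_def by (simp add: divide_neg_pos)
qed

lemma block_const_pos: "0 < block_const"
  unfolding block_const_def using C D by simp

lemma memLp_e_q: "memLp q M (e n)"
  using memLp_mono_exponent[OF fin e_nu] q q_less_nu by simp

lemma memLp_block_nu: "memLp \<nu> M (block k n)"
  unfolding block_def using memLp_sum_cmult[OF _ e_nu] nu by simp

lemma memLp_block_q: "memLp q M (block k n)"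
  unfolding block_def using memLp_sum_cmult[OF _ memLp_e_q] q by simp

lemma block_split: "k \<le> l \<Longrightarrow> l \<le> n \<Longrightarrow> block k n = (\<lambda>x. block k l x + block l n x)"
  unfolding block_def by (auto simp: sum.union_disjoint[symmetric] ivl_disj_un)

lemma dyadic_block_index:
  assumes "m0 \<le> 2 ^ j" "2 ^ j \<le> k + 1" "n < 2 ^ (j + 1)" "m \<in> {k<..n}"
  shows "m0 \<le> m" "(2::real) ^ j \<le> real m" "real m \<le> 2 * 2 ^ j"
proof -
  have "2 ^ j \<le> m" "m \<le> 2 * 2 ^ j" using assms by auto
  then have "real (2 ^ j) \<le> real m" "real m \<le> real (2 * 2 ^ j)" by (simp_all only: of_nat_le_iff)
  then show "m0 \<le> m" "(2::real) ^ j \<le> real m" "real m \<le> 2 * 2 ^ j"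
    using assms(1) \<open>2 ^ j \<le> m\<close> by auto
qed

lemma card_dyadic_block:
  fixes j k n :: nat
  assumes "2 ^ j \<le> k + 1" "n < 2 ^ (j + 1)"
  shows "real (card {k<..n}) \<le> 2 ^ j"
proof -
  have "card {k<..n} \<le> 2 ^ j" using assms by (simp add: algebra_simps)
  then show ?thesis by (simp flip: of_nat_le_iff)
qed

context
  fixes j k n :: nat
  assumes dyadic: "m0 \<le> 2 ^ j" "2 ^ j \<le> k + 1" "n < 2 ^ (j + 1)"
begin

lemma dyadic_block_coeff: "m \<in> {k<..n} \<Longrightarrow> \<bar>c m\<bar> \<le> C * (2 ^ j) powr (- lam)"
  using coeff_decay[OF dyadic_block_index(1)[OF dyadic]] dyadic_block_index(2)[OF dyadic] lam C
  by (smt (verit) mult_left_mono powr_mono2' zero_less_power)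

lemma dyadic_block_e_norm: "m \<in> {k<..n} \<Longrightarrow> Lp_norm \<nu> M (e m) \<le> D * (2 * 2 ^ j) powr \<beta>"
  using norm_growth[OF dyadic_block_index(1)[OF dyadic]] dyadic_block_index(3)[OF dyadic] beta D
  by (smt (verit) mult_left_mono of_nat_0_le_iff powr_mono2)

lemma dyadic_block_L2: "(\<integral>x. \<bar>block k n x\<bar> powr 2 \<partial>M) \<le> C\<^sup>2 * (2 ^ j) powr (1 - 2 * lam)"
proof -
  define J :: real where "J = 2 ^ j"
  have "(\<integral>x. \<bar>block k n x\<bar> powr 2 \<partial>M) = (\<Sum>m\<in>{k<..n}. (c m)\<^sup>2)"
    unfolding block_def by (rule integral_sq_sum_biorthogonal[OF _ integrable_e_mult biorthogonal]) simp
  also have "\<dots> \<le> (\<Sum>m\<in>{k<..n}. (C * J powr (- lam))\<^sup>2)"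
    using dyadic_block_coeff unfolding J_def
    by (intro sum_mono) (metis abs_ge_zero power2_abs power_mono)
  also have "\<dots> \<le> J * (C * J powr (- lam))\<^sup>2"
    using card_dyadic_block[OF dyadic(2,3)] unfolding J_def by (simp add: mult_right_mono)
  also have "\<dots> = C\<^sup>2 * J powr (1 - 2 * lam)"
  proof -
    have "J * (J powr (- lam))\<^sup>2 = J powr (1 - 2 * lam)"
      unfolding J_def by (simp add: power2_eq_square powr_add[symmetric] powr_mult_base)
    then show ?thesis by (simp add: power_mult_distrib mult_ac)
  qed
  finally show ?thesis by (simp add: J_def)
qed

lemma dyadic_block_L_nu: "Lp_norm \<nu> M (block k n) \<le> C * D * 2 powr \<beta> * (2 ^ j) powr (1 - lam + \<beta>)"
proof -
  define J :: real where "J = 2 ^ j"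
  have "Lp_norm \<nu> M (block k n) \<le> (\<Sum>m\<in>{k<..n}. Lp_norm \<nu> M (\<lambda>x. c m * e m x))"
    unfolding block_def
    using memLp_sum(2)[where r=\<nu> and I="{k<..n}" and u="\<lambda>m x. c m * e m x"] memLp_cmult(1)[OF e_nu] nu
    by auto
  also have "\<dots> = (\<Sum>m\<in>{k<..n}. \<bar>c m\<bar> * Lp_norm \<nu> M (e m))"
    using memLp_cmult(2)[OF e_nu] nu by simp
  also have "\<dots> \<le> (\<Sum>m\<in>{k<..n}. C * J powr (- lam) * (D * (2 * J) powr \<beta>))"
    using dyadic_block_coeff dyadic_block_e_norm C unfolding J_def
    by (intro sum_mono mult_mono) (auto simp: Lp_norm_nonneg)
  also have "\<dots> \<le> J * (C * J powr (- lam) * (D * (2 * J) powr \<beta>))"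
    using card_dyadic_block[OF dyadic(2,3)] C D unfolding J_def by (simp add: mult_right_mono)
  also have "\<dots> = C * D * 2 powr \<beta> * J powr (1 - lam + \<beta>)"
  proof -
    have "J * (J powr (- lam) * J powr \<beta>) = J powr (1 - lam + \<beta>)"
      unfolding J_def by (simp add: powr_add[symmetric] powr_mult_base algebra_simps)
    then show ?thesis unfolding J_def by (simp add: powr_mult mult_ac)
  qed
  finally show ?thesis by (simp add: J_def)
qed

lemma dyadic_block_Lq: "Lp_norm q M (block k n) \<le> block_const * (2 powr block_exp) ^ j"
proof -
  define X where "X = C\<^sup>2 * (2 ^ j) powr (1 - 2 * lam)"
  define Z where "Z = C * D * 2 powr \<beta> * (2 ^ j) powr (1 - lam + \<beta>)"
  have "0 < \<nu>" "0 < X" "0 < Z" using nu C D unfolding X_def Z_def by simp_all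
  then have "(\<integral>x. \<bar>block k n x\<bar> powr \<nu> \<partial>M) \<le> Z powr \<nu>"
    using dyadic_block_L_nu[folded Z_def] Lp_norm_le_iff_integral_powr_le[of \<nu> Z M "block k n"] by simp
  then have "(\<integral>x. \<bar>block k n x\<bar> powr q \<partial>M) \<le> X powr theta * (Z powr \<nu>) powr (1 - theta)"
    using Lp_interpolation[OF fin nu q q_less_nu memLp_block_nu dyadic_block_L2[folded X_def]]
      \<open>0 < X\<close> \<open>0 < Z\<close>
    unfolding theta_def[symmetric] one_minus_theta[symmetric] by simp
  then have "Lp_norm q M (block k n) \<le> (X powr theta * (Z powr \<nu>) powr (1 - theta)) powr (1 / q)"
    unfolding Lp_norm_def using q by (intro powr_mono2) (auto simp: integral_nonneg)
  also have "\<dots> = block_const * (2 ^ j) powr block_exp"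
    unfolding X_def Z_def block_const_def block_exp_def
    using powr_interpolation_rearrange[of "C\<^sup>2" "C * D * 2 powr \<beta>" "2 ^ j"] C D by (simp add: mult_ac)
  also have "(2 ^ j) powr block_exp = (2 powr block_exp) ^ j"
    by (simp add: powr_realpow[symmetric] powr_powr mult.commute)
  finally show ?thesis .
qed

end

definition "tail_bound j = block_const * (2 powr block_exp) ^ j / (1 - 2 powr block_exp)"

lemma ratio_less_1: "2 powr block_exp < 1"
  using powr_less_mono[OF block_exp_neg, of 2] by simp

lemma tail_bound_Suc: "tail_bound j = block_const * (2 powr block_exp) ^ j + tail_bound (Suc j)"
proof -
  have "K * x / (1 - r) = K * x + K * (r * x) / (1 - r)" if "r < 1" for K x r :: real
    using that by (simp add: field_simps)
  then show ?thesis using ratio_less_1 unfolding tail_bound_def power_Suc by blast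
qed

lemma tail_bound_nonneg: "0 \<le> tail_bound j"
  using ratio_less_1 block_const_pos unfolding tail_bound_def by simp

lemma tail_bound_tendsto_0: "tail_bound \<longlonglongrightarrow> 0"
proof -
  have "(\<lambda>j. tail_bound j) \<longlonglongrightarrow> block_const * 0 / (1 - 2 powr block_exp)"
    unfolding tail_bound_def using ratio_less_1 by (intro tendsto_intros LIMSEQ_power_zero) auto
  then show ?thesis by simp
qed

text \<open>A block starting in the j-th dyadic interval splits into a partial dyadic block and a
  block starting in the next interval, so the bounds add up to a geometric tail.\<close>
lemma block_Lq_le_tail_bound:
  assumes "m0 \<le> j" "2 ^ j \<le> k + 1" "k + 1 < 2 ^ (j + 1)"
  shows "Lp_norm q M (block k n) \<le> tail_bound j"
  using assms
proof (induction "n - k" arbitrary: k j rule: less_induct)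
  case less
  have m0: "m0 \<le> 2 ^ j" using less.prems(1) less_exp[of j] by linarith
  show ?case
  proof (cases "n < 2 ^ (j + 1)")
    case True
    then show ?thesis
      using dyadic_block_Lq[OF m0 less.prems(2) True] tail_bound_Suc[of j] tail_bound_nonneg[of "Suc j"]
      by linarith
  next
    case False
    define l :: nat where "l = 2 ^ (j + 1) - 1"
    have kl: "k < l" and ln: "l \<le> n" and l1: "l + 1 = 2 ^ (j + 1)"
      using less.prems False unfolding l_def by auto
    have "Lp_norm q M (block k n) \<le> Lp_norm q M (block k l) + Lp_norm q M (block l n)"
      using block_split[of k l n] kl ln Minkowski_inequality_Lp[OF _ memLp_block_q memLp_block_q] q by simp
    also have "\<dots> \<le> block_const * (2 powr block_exp) ^ j + tail_bound (Suc j)"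
    proof (rule add_mono)
      show "Lp_norm q M (block k l) \<le> block_const * (2 powr block_exp) ^ j"
        using dyadic_block_Lq[OF m0 less.prems(2)] l1 by simp
      show "Lp_norm q M (block l n) \<le> tail_bound (Suc j)"
        using less.hyps[of l "Suc j"] less.prems(1) kl ln l1 by simp
    qed
    also have "\<dots> = tail_bound j" using tail_bound_Suc[of j] by simp
    finally show ?thesis .
  qed
qed

lemma block_Lq_small:
  assumes "\<epsilon> > 0"
  obtains k0 where "\<And>k n. k0 \<le> k \<Longrightarrow> Lp_norm q M (block k n) \<le> \<epsilon>"
proof -
  obtain J0 where J0: "\<And>j. J0 \<le> j \<Longrightarrow> tail_bound j < \<epsilon>"
    using order_tendstoD(2)[OF tail_bound_tendsto_0 assms] unfolding eventually_sequentially by blast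
  define J where "J = max J0 m0"
  show ?thesis
  proof (rule that[of "2 ^ J"])
    fix k n :: nat assume k: "2 ^ J \<le> k"
    obtain j where j: "2 ^ j \<le> k + 1" "k + 1 < 2 ^ (j + 1)"
      using ex_power_ivl1[of 2 "k + 1"] by auto
    have "(2::nat) ^ J < 2 ^ (j + 1)" using k j by linarith
    then have "J < j + 1" by (rule power_less_imp_less_exp[rotated]) simp
    then show "Lp_norm q M (block k n) \<le> \<epsilon>"
      using block_Lq_le_tail_bound[OF _ j, where n=n] J0[of j] unfolding J_def by simp
  qed
qed

lemma expansion_Lq:
  assumes p: "1 < p" and f: "memLp p M f" and e_p: "\<And>n. memLp p M (e n)"
    and conv: "Lp_conv p M (\<lambda>k x. \<Sum>m\<le>k. c m * e m x) f"
  shows "memLp q M f" and "Lp_conv q M (\<lambda>k x. \<Sum>m\<le>k. c m * e m x) f"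
proof -
  have diff: "(\<lambda>x. (\<Sum>m\<le>n. c m * e m x) - (\<Sum>m\<le>k. c m * e m x)) = block k n" if "k \<le> n" for k n
  proof -
    have "{..n} = {..k} \<union> {k<..n}" "{..k} \<inter> {k<..n} = {}" using that by auto
    then show ?thesis unfolding block_def by (simp add: sum.union_disjoint)
  qed
  have Cauchy: "\<exists>k0. \<forall>k\<ge>k0. \<forall>n\<ge>k. Lp_norm q M (\<lambda>x. (\<Sum>m\<le>n. c m * e m x) - (\<Sum>m\<le>k. c m * e m x)) \<le> \<epsilon>"
    if \<epsilon>: "\<epsilon> > 0" for \<epsilon>
  proof -
    obtain k0 where "\<And>k n. k0 \<le> k \<Longrightarrow> Lp_norm q M (block k n) \<le> \<epsilon>"
      using block_Lq_small[OF \<epsilon>] by blast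
    then show ?thesis using diff by (intro exI[of _ k0]) simp
  qed
  have "1 \<le> p" "1 \<le> q" using p q by simp_all
  note Lp_conv_if_uniformly_Cauchy[OF fin p \<open>1 \<le> q\<close> memLp_sum_cmult[OF \<open>1 \<le> p\<close> e_p]
      memLp_sum_cmult[OF \<open>1 \<le> q\<close> memLp_e_q] f conv Cauchy]
  then show "memLp q M f" and "Lp_conv q M (\<lambda>k x. \<Sum>m\<le>k. c m * e m x) f" by blast+
qed

end

lemma Lq_expansion_if_coefficient_decay:
  fixes e :: "nat \<Rightarrow> 'a \<Rightarrow> real"
  assumes fin: "finite_measure M" and p: "1 < p"
    and b: "schauder_basis_Lp p M e" and b': "schauder_basis_Lp (p / (p - 1)) M e"
    and f: "memLp p M f"
    and nu: "2 < \<nu>" and q: "2 \<le> q" "q < \<nu>" and e_nu: "\<And>n. memLp \<nu> M (e n)"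
    and lam: "0 \<le> lam" and beta: "0 \<le> \<beta>"
    and C: "0 < C" and decay: "\<forall>\<^sub>F m in sequentially. \<bar>pair M f (e m)\<bar> \<le> C * real m powr (- lam)"
    and D: "0 < D" and growth: "\<forall>\<^sub>F m in sequentially. Lp_norm \<nu> M (e m) \<le> D * real m powr \<beta>"
    and exponents: "q * (\<nu> * (\<beta> + 1 - lam) + 2 * lam - 1) < \<nu> * (2 * \<beta> + 1)"
  shows "memLp q M f \<and> Lp_conv q M (\<lambda>k x. \<Sum>m\<le>k. pair M f (e m) * e m x) f"
proof -
  obtain m0 where m0: "\<And>m. m0 \<le> m \<Longrightarrow>
      \<bar>pair M f (e m)\<bar> \<le> C * real m powr (- lam) \<and> Lp_norm \<nu> M (e m) \<le> D * real m powr \<beta>"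
    using eventually_conj[OF decay growth] unfolding eventually_sequentially by blast
  have e_p: "\<And>n. memLp p M (e n)" and e_p': "\<And>n. memLp (p / (p - 1)) M (e n)"
    using schauder_basis_Lp_memLp[OF b] schauder_basis_Lp_memLp[OF b'] by auto
  interpret decaying_expansion M e "\<lambda>m. pair M f (e m)" \<nu> q C D lam \<beta> m0
  proof (rule decaying_expansion.intro)
    show "integrable M (\<lambda>x. e m x * e n x)" for m n
      using Holder_inequality_Lp(1)[OF p e_p e_p'] .
    show "pair M (e m) (e n) = (if n = m then 1 else 0)" for m n
      using schauder_basis_Lp_biorthogonal[OF b] .
  qed (use fin nu q e_nu C D lam beta exponents m0 in simp_all)
  show ?thesis
    using expansion_Lq[OF p f e_p schauder_basis_Lp_expansion[OF b f]] by blast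
qed

lemma asymp_equiv_seq_upper_bound:
  assumes "asymp_equiv_seq a b"
  obtains C where "0 < C" "\<forall>\<^sub>F m in sequentially. a m \<le> C * b m"
proof -
  obtain c C where "0 < c" "c \<le> C" "\<forall>\<^sub>F m in sequentially. c * b m \<le> a m \<and> a m \<le> C * b m"
    using assms unfolding asymp_equiv_seq_def by blast
  then have "\<forall>\<^sub>F m in sequentially. a m \<le> C * b m" by (auto elim: eventually_mono)
  with \<open>0 < c\<close> \<open>c \<le> C\<close> show ?thesis using that[of C] by simp
qed

lemma exponents_if_intermediate_decay:
  fixes \<nu> \<beta> lam q :: real
  assumes "2 < \<nu>" "lam < (\<nu> * (\<beta> + 1) - 1) / (\<nu> - 2)"
    and "q < \<nu> * (2 * \<beta> + 1) / (\<nu> * (\<beta> + 1 - lam) + 2 * lam - 1)"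
  shows "q * (\<nu> * (\<beta> + 1 - lam) + 2 * lam - 1) < \<nu> * (2 * \<beta> + 1)"
proof -
  have "lam * (\<nu> - 2) < \<nu> * (\<beta> + 1) - 1" using assms(1,2) by (simp add: pos_less_divide_eq)
  then have "0 < \<nu> * (\<beta> + 1 - lam) + 2 * lam - 1" by (simp add: algebra_simps)
  then show ?thesis using assms(3) by (simp add: pos_less_divide_eq)
qed

lemma exponents_if_fast_decay:
  fixes \<nu> \<beta> lam q :: real
  assumes "2 < \<nu>" "0 \<le> \<beta>" "0 \<le> q" "(\<nu> * (\<beta> + 1) - 1) / (\<nu> - 2) \<le> lam"
  shows "q * (\<nu> * (\<beta> + 1 - lam) + 2 * lam - 1) < \<nu> * (2 * \<beta> + 1)"
proof -
  have "\<nu> * (\<beta> + 1) - 1 \<le> lam * (\<nu> - 2)" using assms(1,4) by (simp add: pos_divide_le_eq)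
  then have "\<nu> * (\<beta> + 1 - lam) + 2 * lam - 1 \<le> 0" by (simp add: algebra_simps)
  then have "q * (\<nu> * (\<beta> + 1 - lam) + 2 * lam - 1) \<le> 0" using assms(3) by (simp add: mult_nonneg_nonpos)
  also have "0 < \<nu> * (2 * \<beta> + 1)" using assms(1,2) by simp
  finally show ?thesis .
qed

theorem theorem1:
  fixes M :: "'a measure" and e :: "nat \<Rightarrow> 'a \<Rightarrow> real" and Mn :: "nat \<Rightarrow> real"
    and p \<nu> \<beta> lam :: real and A :: "('a \<Rightarrow> real) \<Rightarrow> ('a \<Rightarrow> real)" and \<psi> :: "'a \<Rightarrow> real"
  assumes fin: "finite_measure M"
    and p: "2 \<le> p"
    and basis_p: "schauder_basis_Lp p M e"
    and basis_p': "schauder_basis_Lp (p / (p - 1)) M e"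
    and nu: "\<nu> > 2"
    and e_nu: "\<And>n. memLp \<nu> M (e n)"
    and e_bound: "\<And>n. Lp_norm \<nu> M (e n) \<le> Mn n"
    and Mn_mono: "\<And>n. Mn n \<le> Mn (Suc n)"
    and A: "bounded_linear_Lp p M A"
    and beta: "0 \<le> \<beta>" and lam: "0 \<le> lam"
    and psi: "memLp p M \<psi>"
    and summ: "\<And>m. summable (\<lambda>n. pair M \<psi> (e n) * pair M (e m) (A (e n)))"
    and asym_f: "asymp_equiv_seq
          (\<lambda>m. \<bar>\<Sum>n. pair M \<psi> (e n) * pair M (e m) (A (e n))\<bar>) (\<lambda>m. real m powr (- lam))"
    and asym_M: "asymp_equiv_seq Mn (\<lambda>m. real m powr \<beta>)"
  shows "(\<forall>m. pair M (A \<psi>) (e m) = (\<Sum>n. pair M \<psi> (e n) * pair M (e m) (A (e n))))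
    \<and> (lam \<le> 1/2 \<longrightarrow>
         memLp p M (A \<psi>) \<and>
         Lp_conv p M (\<lambda>k x. \<Sum>m\<le>k. e m x * (\<Sum>n. pair M \<psi> (e n) * pair M (e m) (A (e n)))) (A \<psi>))
    \<and> (1/2 < lam \<and> lam < (\<nu> * (\<beta> + 1) - 1) / (\<nu> - 2) \<longrightarrow>
         (\<forall>q. 2 \<le> q \<and> q < \<nu> \<and> q < \<nu> * (2 * \<beta> + 1) / (\<nu> * (\<beta> + 1 - lam) + 2 * lam - 1) \<longrightarrow>
           memLp q M (A \<psi>) \<and>
           Lp_conv q M (\<lambda>k x. \<Sum>m\<le>k. e m x * (\<Sum>n. pair M \<psi> (e n) * pair M (e m) (A (e n)))) (A \<psi>)))
    \<and> ((\<nu> * (\<beta> + 1) - 1) / (\<nu> - 2) \<le> lam \<longrightarrow>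
         (\<forall>q. 2 \<le> q \<and> q < \<nu> \<longrightarrow>
           memLp q M (A \<psi>) \<and>
           Lp_conv q M (\<lambda>k x. \<Sum>m\<le>k. e m x * (\<Sum>n. pair M \<psi> (e n) * pair M (e m) (A (e n)))) (A \<psi>)))"
proof -
  have p1: "1 < p" using p by simp
  have coeff: "pair M (A \<psi>) (e m) = (\<Sum>n. pair M \<psi> (e n) * pair M (e m) (A (e n)))" for m
    using pair_bounded_linear_Lp_eq_suminf[OF p1 basis_p basis_p' A psi] .
  have f: "memLp p M (A \<psi>)" using bounded_linear_Lp_memLp[OF A psi] .
  have series: "(\<lambda>k x. \<Sum>m\<le>k. e m x * (\<Sum>n. pair M \<psi> (e n) * pair M (e m) (A (e n))))
      = (\<lambda>k x. \<Sum>m\<le>k. pair M (A \<psi>) (e m) * e m x)"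
    unfolding coeff[symmetric] by (simp only: mult.commute)
  obtain C where C: "0 < C" and decay: "\<forall>\<^sub>F m in sequentially. \<bar>pair M (A \<psi>) (e m)\<bar> \<le> C * real m powr (- lam)"
    by (rule asymp_equiv_seq_upper_bound[OF asym_f, folded coeff])
  obtain D where D: "0 < D" and Mn_bound: "\<forall>\<^sub>F m in sequentially. Mn m \<le> D * real m powr \<beta>"
    by (rule asymp_equiv_seq_upper_bound[OF asym_M])
  have growth: "\<forall>\<^sub>F m in sequentially. Lp_norm \<nu> M (e m) \<le> D * real m powr \<beta>"
    using Mn_bound by (rule eventually_mono) (rule order_trans[OF e_bound])
  have Lq: "memLp q M (A \<psi>) \<and> Lp_conv q M (\<lambda>k x. \<Sum>m\<le>k. pair M (A \<psi>) (e m) * e m x) (A \<psi>)"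
    if "2 \<le> q" "q < \<nu>" "q * (\<nu> * (\<beta> + 1 - lam) + 2 * lam - 1) < \<nu> * (2 * \<beta> + 1)" for q
    using Lq_expansion_if_coefficient_decay[OF fin p1 basis_p basis_p' f nu that(1,2) e_nu lam beta
        C decay D growth that(3)] .
  have intermediate: "memLp q M (A \<psi>) \<and> Lp_conv q M (\<lambda>k x. \<Sum>m\<le>k. pair M (A \<psi>) (e m) * e m x) (A \<psi>)"
    if "lam < (\<nu> * (\<beta> + 1) - 1) / (\<nu> - 2)"
      and "2 \<le> q \<and> q < \<nu> \<and> q < \<nu> * (2 * \<beta> + 1) / (\<nu> * (\<beta> + 1 - lam) + 2 * lam - 1)" for q
    using that exponents_if_intermediate_decay[OF nu that(1)] Lq by blast
  have fast: "memLp q M (A \<psi>) \<and> Lp_conv q M (\<lambda>k x. \<Sum>m\<le>k. pair M (A \<psi>) (e m) * e m x) (A \<psi>)"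
    if "(\<nu> * (\<beta> + 1) - 1) / (\<nu> - 2) \<le> lam" and "2 \<le> q \<and> q < \<nu>" for q
    using that exponents_if_fast_decay[OF nu beta _ that(1), of q] Lq by simp
  show ?thesis
    unfolding series
    using coeff f schauder_basis_Lp_expansion[OF basis_p f] intermediate fast by blast
qed

end
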